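(* Let $1\le k\le n$ and $\rho=\sum_{i=0}^k\lambda_i|D_n^i\rangle\langle D_n^i|$ with $\lambda_i\ge0$, $\sum_{i=0}^k\lambda_i=1$. If there exists $i_*\in\{0,\dots,k\}$ such that $k-i_*$ is even and $\lambda_{i_*}=0$, then $L(\rho)\le k$.
   Context: Dicke states: $|D_n^i\rangle=\binom{n}{i}^{-1/2}\sum_{s\in\{0,1\}^n,\ \sum_js_j=i}|s_1\rangle\otimes\cdots\otimes|s_n\rangle$. For $S\subseteq[n]$, $\rho_S$ is the partial trace of $\rho$ over qubits outside $S$; $\mathcal C(\rho,\mathcal S)=\{\sigma\text{ density matrix}:\sigma_S=\rho_S\ \forall S\in\mathcal S\}$; $\mathcal S$ determines $\rho$ if $\mathcal C(\rho,\mathcal S)=\{\rho\}$; $L(\rho)=\min_{\mathcal S\text{ determines }\rho}\max_{S\in\mathcal S}|S|$. *)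

theory Defs
  imports Complex_Main
begin

text \<open>n-qubit computational basis states are encoded as bit assignments
  s :: nat \<Rightarrow> bool with s j = False for j \<ge> n (qubits are 0,...,n-1).
  An operator on n qubits is a function rho :: basis \<Rightarrow> basis \<Rightarrow> complex
  (matrix entries), required to vanish outside the basis.\<close>

type_synonym bits = "nat \<Rightarrow> bool"
type_synonym qop = "bits \<Rightarrow> bits \<Rightarrow> complex"

definition asg :: "nat set \<Rightarrow> bits set" where
  "asg S = {x. \<forall>j. x j \<longrightarrow> j \<in> S}"

abbreviation basis :: "nat \<Rightarrow> bits set" where
  "basis n \<equiv> asg {0..<n}"

definition density :: "nat \<Rightarrow> qop \<Rightarrow> bool" where
  "density n \<sigma> \<longleftrightarrow>
     (\<forall>s t. (s \<notin> basis n \<or> t \<notin> basis n) \<longrightarrow> \<sigma> s t = 0) \<and>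
     (\<forall>v :: bits \<Rightarrow> complex.
        let q = (\<Sum>s\<in>basis n. \<Sum>t\<in>basis n. cnj (v s) * \<sigma> s t * v t)
        in Im q = 0 \<and> Re q \<ge> 0) \<and>
     (\<Sum>s\<in>basis n. \<sigma> s s) = 1"

definition merge :: "nat set \<Rightarrow> bits \<Rightarrow> bits \<Rightarrow> bits" where
  "merge S x c = (\<lambda>j. if j \<in> S then x j else c j)"

definition ptrace :: "nat \<Rightarrow> nat set \<Rightarrow> qop \<Rightarrow> qop" where
  "ptrace n S \<sigma> x y = (\<Sum>c\<in>asg ({0..<n} - S). \<sigma> (merge S x c) (merge S y c))"

definition same_marginal :: "nat \<Rightarrow> nat set \<Rightarrow> qop \<Rightarrow> qop \<Rightarrow> bool" where
  "same_marginal n S \<sigma> \<rho> \<longleftrightarrow>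
     (\<forall>x\<in>asg S. \<forall>y\<in>asg S. ptrace n S \<sigma> x y = ptrace n S \<rho> x y)"

definition compatible :: "nat \<Rightarrow> qop \<Rightarrow> nat set set \<Rightarrow> qop set" where
  "compatible n \<rho> \<S> = {\<sigma>. density n \<sigma> \<and> (\<forall>S\<in>\<S>. same_marginal n S \<sigma> \<rho>)}"

definition determines :: "nat \<Rightarrow> nat set set \<Rightarrow> qop \<Rightarrow> bool" where
  "determines n \<S> \<rho> \<longleftrightarrow> compatible n \<rho> \<S> = {\<rho>}"

text \<open>L(rho): minimum over determining families of subsets of [n] of the
  maximal subset size (max over the empty family taken as 0).\<close>
definition Lmin :: "nat \<Rightarrow> qop \<Rightarrow> nat" where
  "Lmin n \<rho> = (LEAST m. \<exists>\<S>. (\<forall>S\<in>\<S>. S \<subseteq> {0..<n}) \<and> determines n \<S> \<rho> \<and>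
                           (\<forall>S\<in>\<S>. card S \<le> m))"

definition dicke :: "nat \<Rightarrow> nat \<Rightarrow> bits \<Rightarrow> complex" where
  "dicke n i s = (if s \<in> basis n \<and> card {j. j < n \<and> s j} = i
                  then complex_of_real (1 / sqrt (real (n choose i))) else 0)"

definition dicke_mix :: "nat \<Rightarrow> nat \<Rightarrow> (nat \<Rightarrow> real) \<Rightarrow> qop" where
  "dicke_mix n k lam s t =
     (\<Sum>i\<in>{0..k}. complex_of_real (lam i) * dicke n i s * cnj (dicke n i t))"

end

theory Submission
  imports Defs "HOL-Combinatorics.Transposition"
begin

text \<open>Let sigma be a state with the same k-qubit marginals as rho. The two-qubit
  marginals of rho vanish on antisymmetric vectors, and positivity of sigma transfers this:
  sigma is invariant under permuting qubits, so its entries only depend on the Hamming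
  weights of row and column. The binomial moments sum_s C(|s|,m) sigma(s,s) with m \<le> k are
  sums of marginal entries and hence agree with those of rho. The polynomial
  h(w) = sum_{m=r..k} (-1)^(m-r) C(m,r) C(w,m) = (-1)^(k-r) C(w,r) C(w-r-1,k-r)
  is the indicator of r on {0..k} and is positive beyond k when k - r is even; for r = i_*
  with lambda_r = 0 this gives sum_s h(|s|) sigma(s,s) = 0, so sigma vanishes on all weights
  above k. Finally, an entry between weights a, b \<le> k is read off from the marginal on the
  first k qubits, whose remaining summands have larger total weight; downward induction on
  a + b gives sigma = rho.\<close>

lemma asg_eq_image_Pow: "asg S = (\<lambda>T j. j \<in> T) ` Pow S"
proof (rule set_eqI, rule iffI)
  fix x assume "x \<in> asg S"
  then have "x = (\<lambda>j. j \<in> {j. x j})" "{j. x j} \<subseteq> S" by (auto simp: asg_def)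
  then show "x \<in> (\<lambda>T j. j \<in> T) ` Pow S" by blast
qed (auto simp: asg_def)

lemma finite_asg: "finite S \<Longrightarrow> finite (asg S)"
  by (simp add: asg_eq_image_Pow)

lemma finite_basis: "finite (basis n)"
  by (simp add: finite_asg)

lemma mem_basis_iff: "s \<in> basis n \<longleftrightarrow> (\<forall>j. s j \<longrightarrow> j < n)"
  by (simp add: asg_def)

definition weight :: "nat \<Rightarrow> bits \<Rightarrow> nat" where
  "weight n s = card {j. j < n \<and> s j}"

definition prefix_state :: "nat \<Rightarrow> bits" where
  "prefix_state a = (\<lambda>j. j < a)"

lemma weight_le: "weight n s \<le> n"
proof -
  have "card {j. j < n \<and> s j} \<le> card {0..<n}" by (rule card_mono) auto
  then show ?thesis by (simp add: weight_def)
qed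

lemma prefix_state_in_basis: "a \<le> n \<Longrightarrow> prefix_state a \<in> basis n"
  by (simp add: mem_basis_iff prefix_state_def)

lemma weight_prefix_state: "a \<le> n \<Longrightarrow> weight n (prefix_state a) = a"
proof -
  assume "a \<le> n"
  then have "{j. j < n \<and> prefix_state a j} = {0..<a}" by (auto simp: prefix_state_def)
  then show ?thesis by (simp add: weight_def)
qed

lemma weight_eq_0_imp_prefix_state:
  assumes "s \<in> basis n" "weight n s = 0"
  shows "s = prefix_state 0"
proof (rule ext)
  fix j
  have "{j. j < n \<and> s j} = {}" using assms(2) by (simp add: weight_def)
  then show "s j = prefix_state 0 j"
    using assms(1) by (auto simp: mem_basis_iff prefix_state_def)
qed

lemma card_weight_eq: "card {s \<in> basis n. weight n s = i} = n choose i"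
proof -
  let ?subsets = "{T. T \<subseteq> {0..<n} \<and> card T = i}"
  have "{s \<in> basis n. weight n s = i} = (\<lambda>T j. j \<in> T) ` ?subsets"
  proof (rule set_eqI, rule iffI)
    fix s assume s: "s \<in> {s \<in> basis n. weight n s = i}"
    then have "{j. s j} = {j. j < n \<and> s j}" by (auto simp: mem_basis_iff)
    then have "{j. s j} \<in> ?subsets" using s by (simp add: weight_def subset_iff)
    then show "s \<in> (\<lambda>T j. j \<in> T) ` ?subsets" by (rule rev_image_eqI) simp
  next
    fix s assume "s \<in> (\<lambda>T j. j \<in> T) ` ?subsets"
    then obtain T where T: "T \<subseteq> {0..<n}" "card T = i" "s = (\<lambda>j. j \<in> T)" by auto
    then have "{j. j < n \<and> s j} = T" by auto
    with T show "s \<in> {s \<in> basis n. weight n s = i}" by (auto simp: weight_def mem_basis_iff)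
  qed
  moreover have "inj_on (\<lambda>T j. j \<in> T) ?subsets"
    by (rule inj_onI) (simp add: fun_eq_iff set_eq_iff)
  ultimately show ?thesis
    using n_subsets[of "{0..<n}" i] by (simp add: card_image)
qed

lemma swap_in_basis:
  assumes "a < n" "b < n" "t \<in> basis n"
  shows "t \<circ> transpose a b \<in> basis n"
  using assms by (auto simp: mem_basis_iff transpose_def)

lemma weight_swap:
  assumes "a < n" "b < n"
  shows "weight n (t \<circ> transpose a b) = weight n t"
proof -
  have "{j. j < n \<and> (t \<circ> transpose a b) j} = transpose a b ` {j. j < n \<and> t j}"
    using assms by (auto simp: transpose_def)
  then show ?thesis
    by (simp add: weight_def card_image inj_on_subset[OF inj_transpose])
qed

text \<open>Bubble the ones of t to the front: each transposition reduces the number of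
  positions where t differs from its prefix state.\<close>

lemma transpose_invariant_eq_prefix_state:
  assumes inv: "\<And>t a b. t \<in> basis n \<Longrightarrow> a < n \<Longrightarrow> b < n \<Longrightarrow> f (t \<circ> transpose a b) = f t"
  shows "t \<in> basis n \<Longrightarrow> f t = f (prefix_state (weight n t))"
proof (induction "card {j. j < n \<and> t j \<noteq> (j < weight n t)}" arbitrary: t rule: less_induct)
  case less
  define w where "w = weight n t"
  define U where "U = {j. j < n \<and> t j}"
  have tB: "\<And>j. t j \<Longrightarrow> j < n" using less.prems unfolding mem_basis_iff by blast
  have cU: "card U = w" by (simp add: U_def w_def weight_def)
  have wn: "w \<le> n" using weight_le w_def by simp
  show ?case
  proof (cases "\<forall>a<w. t a")
    case True
    then have "{0..<w} \<subseteq> U" using wn by (auto simp: U_def)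
    then have "{0..<w} = U" using cU by (simp add: card_subset_eq U_def)
    then have "t = prefix_state w"
      using tB wn by (auto simp: fun_eq_iff prefix_state_def U_def set_eq_iff)
    then show ?thesis by (simp add: w_def)
  next
    case False
    then obtain a where a: "a < w" "\<not> t a" by blast
    have "\<not> U \<subseteq> {0..<w} - {a}"
      using card_mono[of "{0..<w} - {a}" U] a cU by auto
    then obtain b where "b \<in> U" "b \<notin> {0..<w} - {a}" by blast
    then have b: "b < n" "t b" "\<not> b < w" using a by (auto simp: U_def)
    have an: "a < n" using a wn by simp
    define t' where "t' = t \<circ> transpose a b"
    have t'B: "t' \<in> basis n" using swap_in_basis[OF an b(1) less.prems] t'_def by simp
    have wt': "weight n t' = w" using weight_swap[OF an b(1)] t'_def w_def by simp
    define D where "D = {j. j < n \<and> t j \<noteq> (j < w)}"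
    have "{j. j < n \<and> t' j \<noteq> (j < weight n t')} = D - {a, b}"
    proof (rule set_eqI)
      fix j show "j \<in> {j. j < n \<and> t' j \<noteq> (j < weight n t')} \<longleftrightarrow> j \<in> D - {a, b}"
        using a b an unfolding wt' by (cases "j = a"; cases "j = b") (auto simp: D_def t'_def)
    qed
    moreover have "card (D - {a, b}) < card D"
      by (rule psubset_card_mono) (use a an in \<open>auto simp: D_def\<close>)
    ultimately have "f t' = f (prefix_state (weight n t'))"
      using less.hyps[OF _ t'B] by (simp add: D_def w_def)
    moreover have "f t' = f t" using inv[OF less.prems an b(1)] t'_def by simp
    ultimately show ?thesis using wt' w_def by simp
  qed
qed

section \<open>Positive semidefinite operators\<close>

definition ket :: "bits \<Rightarrow> bits \<Rightarrow> complex" where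
  "ket t = (\<lambda>s. if s = t then 1 else 0)"

definition sesq :: "nat \<Rightarrow> qop \<Rightarrow> (bits \<Rightarrow> complex) \<Rightarrow> (bits \<Rightarrow> complex) \<Rightarrow> complex" where
  "sesq n X v w = (\<Sum>s\<in>basis n. \<Sum>t\<in>basis n. cnj (v s) * X s t * w t)"

lemma density_vanishes_outside_basis:
  "density n X \<Longrightarrow> s \<notin> basis n \<or> t \<notin> basis n \<Longrightarrow> X s t = 0"
  unfolding density_def by blast

lemma density_sesq_nonneg:
  "density n X \<Longrightarrow> Im (sesq n X v v) = 0 \<and> Re (sesq n X v v) \<ge> 0"
  unfolding density_def sesq_def Let_def by blast

lemma sum_mult_ket: "finite A \<Longrightarrow> (\<Sum>t\<in>A. f t * ket u t) = (if u \<in> A then f u else 0)"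
proof -
  have "f t * ket u t = (if t = u then f u else 0)" for t by (simp add: ket_def)
  then show "finite A \<Longrightarrow> ?thesis" by simp
qed

lemma sum_cnj_ket_mult: "finite A \<Longrightarrow> (\<Sum>t\<in>A. cnj (ket u t) * f t) = (if u \<in> A then f u else 0)"
proof -
  have "cnj (ket u t) * f t = (if t = u then f u else 0)" for t by (simp add: ket_def)
  then show "finite A \<Longrightarrow> ?thesis" by simp
qed

lemma sesq_ket:
  assumes "t \<in> basis n" "u \<in> basis n"
  shows "sesq n X (ket t) (ket u) = X t u"
proof -
  have "sesq n X (ket t) (ket u) = (\<Sum>s\<in>basis n. cnj (ket t s) * (\<Sum>t'\<in>basis n. X s t' * ket u t'))"
    unfolding sesq_def by (simp add: sum_distrib_left mult.assoc)
  also have "\<dots> = X t u"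
    using assms by (simp add: sum_mult_ket sum_cnj_ket_mult finite_basis)
  finally show ?thesis .
qed

lemma sesq_add_left: "sesq n X (\<lambda>s. a s + b s) w = sesq n X a w + sesq n X b w"
  unfolding sesq_def by (simp add: algebra_simps sum.distrib)

lemma sesq_add_right: "sesq n X v (\<lambda>s. a s + b s) = sesq n X v a + sesq n X v b"
  unfolding sesq_def by (simp add: algebra_simps sum.distrib)

lemma sesq_diff_left: "sesq n X (\<lambda>s. a s - b s) w = sesq n X a w - sesq n X b w"
  unfolding sesq_def by (simp add: algebra_simps sum_subtractf)

lemma sesq_diff_right: "sesq n X v (\<lambda>s. a s - b s) = sesq n X v a - sesq n X v b"
  unfolding sesq_def by (simp add: algebra_simps sum_subtractf)

lemma sesq_scale_left: "sesq n X (\<lambda>s. c * a s) w = cnj c * sesq n X a w"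
  unfolding sesq_def by (simp add: algebra_simps sum_distrib_left)

lemma sesq_scale_right: "sesq n X v (\<lambda>s. c * a s) = c * sesq n X v a"
  unfolding sesq_def by (simp add: algebra_simps sum_distrib_left)

lemmas sesq_linear =
  sesq_add_left sesq_add_right sesq_diff_left sesq_diff_right sesq_scale_left sesq_scale_right

lemma density_diag_real:
  assumes "density n X" "s \<in> basis n"
  shows "Im (X s s) = 0" "Re (X s s) \<ge> 0"
  using density_sesq_nonneg[OF assms(1), of "ket s"] sesq_ket[OF assms(2,2)] by simp_all

text \<open>Polarization with the test vectors e_s + e_t and e_s + i e_t.\<close>

lemma density_hermitian:
  assumes d: "density n X"
  shows "X s t = cnj (X t s)"
proof (cases "s \<in> basis n \<and> t \<in> basis n")
  case False
  then show ?thesis using density_vanishes_outside_basis[OF d] by auto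
next
  case True
  then have s: "s \<in> basis n" and t: "t \<in> basis n" by auto
  have "sesq n X (\<lambda>x. ket s x + ket t x) (\<lambda>x. ket s x + ket t x) = X s s + X s t + X t s + X t t"
    using s t by (simp add: sesq_linear sesq_ket)
  then have im: "Im (X s t) + Im (X t s) = 0"
    using density_sesq_nonneg[OF d, of "\<lambda>x. ket s x + ket t x"]
      density_diag_real(1)[OF d s] density_diag_real(1)[OF d t] by simp
  have "sesq n X (\<lambda>x. ket s x + \<i> * ket t x) (\<lambda>x. ket s x + \<i> * ket t x)
      = X s s + \<i> * X s t - \<i> * X t s + X t t"
    using s t by (simp add: sesq_linear sesq_ket)
  then have re: "Re (X s t) - Re (X t s) = 0"
    using density_sesq_nonneg[OF d, of "\<lambda>x. ket s x + \<i> * ket t x"]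
      density_diag_real(1)[OF d s] density_diag_real(1)[OF d t] by simp
  show ?thesis using im re by (simp add: complex_eq_iff)
qed

lemma density_sesq_swap:
  assumes d: "density n X"
  shows "sesq n X v w = cnj (sesq n X w v)"
proof -
  have "cnj (sesq n X w v) = (\<Sum>s\<in>basis n. \<Sum>t\<in>basis n. cnj (v t) * X t s * w s)"
    unfolding sesq_def cnj_sum
  proof (intro sum.cong refl)
    fix s t
    show "cnj (cnj (w s) * X s t * v t) = cnj (v t) * X t s * w s"
      using density_hermitian[OF d, of t s] by (simp add: mult.commute mult.left_commute)
  qed
  also have "\<dots> = sesq n X v w" unfolding sesq_def by (rule sum.swap)
  finally show ?thesis by simp
qed

text \<open>Otherwise the quadratic form would be negative at v - \<epsilon> X v for small \<epsilon> > 0.\<close>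

lemma density_sesq_eq_0_imp_kernel:
  assumes d: "density n X" and v: "sesq n X v v = 0" and s: "s \<in> basis n"
  shows "(\<Sum>t\<in>basis n. X s t * v t) = 0"
proof -
  define Xv where "Xv = (\<lambda>s. \<Sum>t\<in>basis n. X s t * v t)"
  define A where "A = (\<Sum>s\<in>basis n. (cmod (Xv s))\<^sup>2)"
  define C where "C = Re (sesq n X Xv Xv)"
  have "C \<ge> 0" using density_sesq_nonneg[OF d] C_def by simp
  have "A \<ge> 0" unfolding A_def by (simp add: sum_nonneg)
  have "sesq n X Xv v = (\<Sum>s\<in>basis n. cnj (Xv s) * Xv s)"
    unfolding sesq_def Xv_def by (simp add: sum_distrib_left mult.assoc)
  also have "\<dots> = of_real A"
    unfolding A_def of_real_sum by (intro sum.cong refl) (metis complex_norm_square mult.commute)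
  finally have XvXv: "sesq n X Xv v = of_real A" .
  then have "sesq n X v Xv = of_real A" using density_sesq_swap[OF d, of v Xv] by simp
  have descent: "2 * \<epsilon> * A \<le> \<epsilon>\<^sup>2 * C" if "\<epsilon> > 0" for \<epsilon> :: real
  proof -
    let ?w = "\<lambda>s. v s + (- of_real \<epsilon>) * Xv s"
    have "sesq n X ?w ?w = - 2 * of_real \<epsilon> * of_real A + of_real (\<epsilon>\<^sup>2) * sesq n X Xv Xv"
      using v XvXv \<open>sesq n X v Xv = of_real A\<close>
      by (simp add: sesq_linear power2_eq_square algebra_simps)
    then show ?thesis using density_sesq_nonneg[OF d, of ?w] by (simp add: C_def)
  qed
  have "A = 0"
  proof (rule ccontr)
    assume "A \<noteq> 0"
    with \<open>A \<ge> 0\<close> have "A > 0" by simp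
    define \<epsilon> where "\<epsilon> = A / (C + 1)"
    have "\<epsilon> > 0" using \<open>A > 0\<close> \<open>C \<ge> 0\<close> by (simp add: \<epsilon>_def)
    with descent have "2 * A \<le> \<epsilon> * C" by (simp add: power2_eq_square)
    moreover have "\<epsilon> * C < A" using \<open>A > 0\<close> \<open>C \<ge> 0\<close> by (simp add: \<epsilon>_def field_simps)
    ultimately show False using \<open>A > 0\<close> by simp
  qed
  then have "\<forall>s\<in>basis n. (cmod (Xv s))\<^sup>2 = 0"
    using sum_nonneg_eq_0_iff[OF finite_basis[of n], of "\<lambda>s. (cmod (Xv s))\<^sup>2"] A_def by simp
  then show ?thesis using s Xv_def by simp
qed

lemma density_diag_eq_0_imp_cross_eq_0:
  assumes d: "density n X" and v: "v \<in> basis n" and "X v v = 0"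
  shows "X u v = 0" "X v u = 0"
proof -
  show uv: "X u v = 0" for u
  proof (cases "u \<in> basis n")
    case True
    have "sesq n X (ket v) (ket v) = 0" using sesq_ket[OF v v] \<open>X v v = 0\<close> by simp
    from density_sesq_eq_0_imp_kernel[OF d this True] show ?thesis
      using v by (simp add: sum_mult_ket finite_basis)
  qed (simp add: density_vanishes_outside_basis[OF d])
  show "X v u = 0" using density_hermitian[OF d, of v u] uv by simp
qed

section \<open>Partial traces and binomial moments\<close>

lemma merge_self: "\<forall>j\<in>S. s j = x j \<Longrightarrow> merge S x s = s"
  unfolding merge_def by (intro ext) auto

lemma sum_asg_merge:
  assumes S: "S \<subseteq> {0..<n}"
  shows "(\<Sum>c\<in>asg ({0..<n} - S). G (merge S x c)) = (\<Sum>s\<in>{s\<in>basis n. \<forall>j\<in>S. s j = x j}. G s)"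
proof (rule sum.reindex_bij_witness[where j="merge S x" and i="\<lambda>s j. j \<notin> S \<and> s j"])
  fix c assume c: "c \<in> asg ({0..<n} - S)"
  then have c': "\<And>j. c j \<Longrightarrow> j < n \<and> j \<notin> S" unfolding asg_def by auto
  show "(\<lambda>j. j \<notin> S \<and> merge S x c j) = c"
  proof (rule ext)
    fix j show "(j \<notin> S \<and> merge S x c j) = c j" using c'[of j] unfolding merge_def by auto
  qed
  have "\<forall>j. merge S x c j \<longrightarrow> j \<in> {0..<n}"
  proof (intro allI impI)
    fix j assume "merge S x c j"
    then have "(j \<in> S \<and> x j) \<or> (j \<notin> S \<and> c j)" unfolding merge_def by (simp split: if_splits)
    then show "j \<in> {0..<n}" using c'[of j] S by (meson atLeastLessThan_iff le0 subsetD)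
  qed
  moreover have "\<forall>j\<in>S. merge S x c j = x j" unfolding merge_def by simp
  ultimately show "merge S x c \<in> {s\<in>basis n. \<forall>j\<in>S. s j = x j}" unfolding asg_def by simp
next
  fix s assume s: "s \<in> {s\<in>basis n. \<forall>j\<in>S. s j = x j}"
  then have s1: "\<And>j. s j \<Longrightarrow> j < n" and s2: "\<And>j. j \<in> S \<Longrightarrow> s j = x j" unfolding asg_def by auto
  show "merge S x (\<lambda>j. j \<notin> S \<and> s j) = s"
  proof (rule ext)
    fix j show "merge S x (\<lambda>j. j \<notin> S \<and> s j) j = s j" using s2[of j] unfolding merge_def by auto
  qed
  have "\<forall>j. (j \<notin> S \<and> s j) \<longrightarrow> j \<in> {0..<n} - S" using s1 by simp
  then show "(\<lambda>j. j \<notin> S \<and> s j) \<in> asg ({0..<n} - S)" unfolding asg_def by simp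
qed simp

lemma ptrace_eq_sum_agreeing:
  assumes "S \<subseteq> {0..<n}"
  shows "ptrace n S X x y = (\<Sum>s\<in>{s\<in>basis n. \<forall>j\<in>S. s j = x j}. X s (merge S y s))"
proof -
  have "ptrace n S X x y = (\<Sum>c\<in>asg ({0..<n} - S). (\<lambda>s. X s (merge S y s)) (merge S x c))"
    unfolding ptrace_def by (rule sum.cong) (auto simp: merge_def)
  then show ?thesis using sum_asg_merge[OF assms] by simp
qed

lemma ptrace_indicator_diag:
  assumes "T \<subseteq> {0..<n}"
  shows "ptrace n T X (\<lambda>j. j \<in> T) (\<lambda>j. j \<in> T) = (\<Sum>s\<in>{s\<in>basis n. T \<subseteq> {j. s j}}. X s s)"
proof -
  have "{s\<in>basis n. \<forall>j\<in>T. s j = (j \<in> T)} = {s\<in>basis n. T \<subseteq> {j. s j}}" by blast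
  moreover have "merge T (\<lambda>j. j \<in> T) s = s" if "T \<subseteq> {j. s j}" for s
    using that by (intro merge_self) auto
  ultimately show ?thesis
    using assms by (simp add: ptrace_eq_sum_agreeing)
qed

text \<open>Double counting the pairs (T, s) with T a set of m ones of s.\<close>

lemma sum_ptrace_indicator_diag:
  "(\<Sum>T\<in>{T. T \<subseteq> {0..<n} \<and> card T = m}. ptrace n T X (\<lambda>j. j \<in> T) (\<lambda>j. j \<in> T))
     = (\<Sum>s\<in>basis n. of_nat (weight n s choose m) * X s s)"
proof -
  let ?P = "{T. T \<subseteq> {0..<n} \<and> card T = m}"
  have fP: "finite ?P" by (rule finite_subset[of _ "Pow {0..<n}"]) auto
  have "(\<Sum>T\<in>?P. ptrace n T X (\<lambda>j. j \<in> T) (\<lambda>j. j \<in> T))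
      = (\<Sum>T\<in>?P. \<Sum>s\<in>basis n. if T \<subseteq> {j. s j} then X s s else 0)"
    by (intro sum.cong refl) (simp add: ptrace_indicator_diag sum.inter_filter[OF finite_basis])
  also have "\<dots> = (\<Sum>s\<in>basis n. \<Sum>T\<in>?P. if T \<subseteq> {j. s j} then X s s else 0)"
    by (rule sum.swap)
  also have "\<dots> = (\<Sum>s\<in>basis n. of_nat (weight n s choose m) * X s s)"
  proof (rule sum.cong[OF refl])
    fix s assume "s \<in> basis n"
    then have "{T \<in> ?P. T \<subseteq> {j. s j}} = {T. T \<subseteq> {j. j < n \<and> s j} \<and> card T = m}"
      by (auto simp: mem_basis_iff)
    then have "card {T \<in> ?P. T \<subseteq> {j. s j}} = weight n s choose m"
      using n_subsets[of "{j. j < n \<and> s j}" m] by (simp add: weight_def)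
    then show "(\<Sum>T\<in>?P. if T \<subseteq> {j. s j} then X s s else 0) = of_nat (weight n s choose m) * X s s"
      by (simp add: sum.inter_filter[OF fP, symmetric])
  qed
  finally show ?thesis .
qed

lemma same_marginals_imp_binomial_moment_eq:
  assumes "\<And>T. T \<subseteq> {0..<n} \<Longrightarrow> card T \<le> k \<Longrightarrow> same_marginal n T X Y" and "m \<le> k"
  shows "(\<Sum>s\<in>basis n. of_nat (weight n s choose m) * X s s)
       = (\<Sum>s\<in>basis n. of_nat (weight n s choose m) * Y s s)"
proof -
  have "ptrace n T X (\<lambda>j. j \<in> T) (\<lambda>j. j \<in> T) = ptrace n T Y (\<lambda>j. j \<in> T) (\<lambda>j. j \<in> T)"
    if "T \<subseteq> {0..<n}" "card T = m" for T
    using assms that by (auto simp: same_marginal_def asg_def)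
  then show ?thesis
    unfolding sum_ptrace_indicator_diag[symmetric] by (intro sum.cong) auto
qed

definition swap_invariant :: "nat \<Rightarrow> qop \<Rightarrow> bool" where
  "swap_invariant n X \<longleftrightarrow> (\<forall>a<n. \<forall>b<n. \<forall>s t.
     X (s \<circ> transpose a b) t = X s t \<and> X s (t \<circ> transpose a b) = X s t)"

lemma swap_in_basis_iff:
  assumes "a < n" "b < n"
  shows "t \<circ> transpose a b \<in> basis n \<longleftrightarrow> t \<in> basis n"
  using swap_in_basis[OF assms, of t] swap_in_basis[OF assms, of "t \<circ> transpose a b"]
  by (auto simp: comp_assoc)

lemma dicke_mult_cnj_dicke:
  "dicke n i s * cnj (dicke n i t) =
     (if s \<in> basis n \<and> t \<in> basis n \<and> weight n s = i \<and> weight n t = i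
      then of_real (1 / real (n choose i)) else 0)"
  by (simp add: dicke_def weight_def flip: of_real_mult)

lemma dicke_mix_eq:
  "dicke_mix n k lam s t =
     (if s \<in> basis n \<and> t \<in> basis n \<and> weight n s = weight n t \<and> weight n s \<le> k
      then of_real (lam (weight n s) / real (n choose weight n s)) else 0)"
proof -
  have "of_real (lam i) * dicke n i s * cnj (dicke n i t) =
    (if i = weight n s then if s \<in> basis n \<and> t \<in> basis n \<and> weight n s = weight n t
      then of_real (lam (weight n s) / real (n choose weight n s)) else 0 else 0)" for i
    by (auto simp: mult.assoc dicke_mult_cnj_dicke)
  then show ?thesis by (simp add: dicke_mix_def)
qed

lemma swap_invariant_dicke_mix: "swap_invariant n (dicke_mix n k lam)"
  by (simp add: swap_invariant_def dicke_mix_eq swap_in_basis_iff weight_swap)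

lemma sesq_mixture:
  fixes \<phi> :: "nat \<Rightarrow> bits \<Rightarrow> complex" and I :: "nat set"
  shows "sesq n (\<lambda>s t. \<Sum>i\<in>I. of_real (lam i) * \<phi> i s * cnj (\<phi> i t)) v v
    = of_real (\<Sum>i\<in>I. lam i * (cmod (\<Sum>t\<in>basis n. cnj (\<phi> i t) * v t))\<^sup>2)"
proof -
  define z where "z i = (\<Sum>t\<in>basis n. cnj (\<phi> i t) * v t)" for i
  have cnj_z: "cnj (z i) = (\<Sum>s\<in>basis n. cnj (v s) * \<phi> i s)" for i
    unfolding z_def cnj_sum by (simp add: mult.commute)
  have "sesq n (\<lambda>s t. \<Sum>i\<in>I. of_real (lam i) * \<phi> i s * cnj (\<phi> i t)) v v
      = (\<Sum>s\<in>basis n. \<Sum>t\<in>basis n. \<Sum>i\<in>I. of_real (lam i) * (cnj (v s) * \<phi> i s) * (cnj (\<phi> i t) * v t))"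
    unfolding sesq_def sum_distrib_left sum_distrib_right by (simp only: ac_simps)
  also have "\<dots> = (\<Sum>i\<in>I. \<Sum>s\<in>basis n. \<Sum>t\<in>basis n. of_real (lam i) * (cnj (v s) * \<phi> i s) * (cnj (\<phi> i t) * v t))"
    by (subst sum.swap) (simp only: sum.swap[of _ I])
  also have "\<dots> = (\<Sum>i\<in>I. of_real (lam i) * cnj (z i) * z i)"
    unfolding cnj_z unfolding z_def mult.assoc sum_product by (simp only: sum_distrib_left mult.assoc)
  also have "\<dots> = of_real (\<Sum>i\<in>I. lam i * (cmod (z i))\<^sup>2)"
    unfolding of_real_sum
    by (intro sum.cong refl) (metis complex_norm_square mult.assoc mult.commute of_real_mult)
  finally show ?thesis by (simp add: z_def)
qed

lemma trace_dicke_mix: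
  assumes "k \<le> n"
  shows "(\<Sum>s\<in>basis n. dicke_mix n k lam s s) = of_real (\<Sum>i\<in>{0..k}. lam i)"
proof -
  have "(\<Sum>s\<in>basis n. dicke_mix n k lam s s)
      = (\<Sum>i\<in>{0..k}. \<Sum>s\<in>basis n. if weight n s = i then of_real (lam i / real (n choose i)) else 0)"
    unfolding dicke_mix_eq by (subst sum.swap) (simp add: sum.delta' cong: if_cong)
  also have "\<dots> = (\<Sum>i\<in>{0..k}. of_real (lam i))"
  proof (intro sum.cong refl)
    fix i assume "i \<in> {0..k}"
    then have "real (n choose i) \<noteq> 0" using assms by simp
    then show "(\<Sum>s\<in>basis n. if weight n s = i then of_real (lam i / real (n choose i)) else 0)
        = complex_of_real (lam i)"
      by (simp add: sum.If_cases finite_basis Int_def card_weight_eq flip: of_real_mult)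
  qed
  finally show ?thesis by simp
qed

lemma density_dicke_mix:
  assumes "k \<le> n" and "\<forall>i\<in>{0..k}. lam i \<ge> 0" and "(\<Sum>i\<in>{0..k}. lam i) = 1"
  shows "density n (dicke_mix n k lam)"
proof -
  have "Im (sesq n (dicke_mix n k lam) v v) = 0 \<and> Re (sesq n (dicke_mix n k lam) v v) \<ge> 0" for v
    using assms(2) unfolding dicke_mix_def[abs_def] sesq_mixture by (auto intro!: sum_nonneg)
  moreover have "(\<Sum>s\<in>basis n. dicke_mix n k lam s s) = 1"
    using trace_dicke_mix[OF assms(1)] assms(3) by (simp del: of_real_sum)
  ultimately show ?thesis
    unfolding density_def Let_def sesq_def by (simp add: dicke_mix_eq)
qed

section \<open>Permutation symmetry from two-qubit marginals\<close>

lemma swap_invariant_eq_prefix_states: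
  assumes X: "swap_invariant n X" and "s \<in> basis n" "t \<in> basis n"
  shows "X s t = X (prefix_state (weight n s)) (prefix_state (weight n t))"
proof -
  have "X s t = X s (prefix_state (weight n t))"
    by (rule transpose_invariant_eq_prefix_state[OF _ assms(3)])
      (use X in \<open>unfold swap_invariant_def, blast\<close>)
  also have "\<dots> = X (prefix_state (weight n s)) (prefix_state (weight n t))"
    by (rule transpose_invariant_eq_prefix_state[OF _ assms(2)])
      (use X in \<open>unfold swap_invariant_def, blast\<close>)
  finally show ?thesis .
qed

text \<open>The {a,b}-marginal entries at |10>, |01> combine into the quadratic form of Z on the
  antisymmetric vectors e_u - e_u', u' the image of u under the transposition.\<close>

lemma pair_marginal_antisymmetric_part:
  assumes an: "a < n" and bn: "b < n" and ab: "a \<noteq> b"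
  defines "x \<equiv> \<lambda>j. j = a" and "y \<equiv> \<lambda>j. j = b"
  shows "ptrace n {a, b} Z x x + ptrace n {a, b} Z y y - ptrace n {a, b} Z x y - ptrace n {a, b} Z y x
    = (\<Sum>u\<in>{u \<in> basis n. u a \<and> \<not> u b}.
         sesq n Z (\<lambda>s. ket u s - ket (u \<circ> transpose a b) s) (\<lambda>s. ket u s - ket (u \<circ> transpose a b) s))"
proof -
  let ?S = "{a, b}" and ?\<tau> = "\<lambda>u. u \<circ> transpose a b"
  define A where "A = {u \<in> basis n. u a \<and> \<not> u b}"
  define B where "B = {u \<in> basis n. \<not> u a \<and> u b}"
  have S: "?S \<subseteq> {0..<n}" using an bn by simp
  have A_eq: "{s\<in>basis n. \<forall>j\<in>?S. s j = x j} = A" and B_eq: "{s\<in>basis n. \<forall>j\<in>?S. s j = y j} = B"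
    using ab by (auto simp: A_def B_def x_def y_def)
  have swap_A: "?\<tau> u \<in> B" if "u \<in> A" for u
    using that swap_in_basis[OF an bn] by (auto simp: A_def B_def)
  have swap_B: "?\<tau> u \<in> A" if "u \<in> B" for u
    using that swap_in_basis[OF an bn] by (auto simp: A_def B_def)
  have reindex: "(\<Sum>u\<in>B. g u) = (\<Sum>u\<in>A. g (?\<tau> u))" for g :: "bits \<Rightarrow> complex"
    by (rule sum.reindex_bij_witness[where i="?\<tau>" and j="?\<tau>"]) (auto simp: comp_assoc swap_A swap_B)
  have merge_y: "merge ?S y u = ?\<tau> u" if "u \<in> A" for u
    using that ab by (auto simp: A_def y_def merge_def transpose_def)
  have merge_x: "merge ?S x u = ?\<tau> u" if "u \<in> B" for u
    using that ab by (auto simp: B_def x_def merge_def transpose_def)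
  have merge_A: "merge ?S x u = u" if "u \<in> A" for u
    using that ab by (intro merge_self) (auto simp: A_def x_def)
  have merge_B: "merge ?S y u = u" if "u \<in> B" for u
    using that ab by (intro merge_self) (auto simp: B_def y_def)
  have "ptrace n ?S Z x x = (\<Sum>u\<in>A. Z u u)"
    unfolding ptrace_eq_sum_agreeing[OF S] A_eq
    by (intro sum.cong refl) (simp add: merge_A)
  moreover have "ptrace n ?S Z y y = (\<Sum>u\<in>A. Z (?\<tau> u) (?\<tau> u))"
  proof -
    have "ptrace n ?S Z y y = (\<Sum>u\<in>B. Z u u)"
      unfolding ptrace_eq_sum_agreeing[OF S] B_eq by (intro sum.cong refl) (simp add: merge_B)
    then show ?thesis by (simp only: reindex)
  qed
  moreover have "ptrace n ?S Z x y = (\<Sum>u\<in>A. Z u (?\<tau> u))"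
    unfolding ptrace_eq_sum_agreeing[OF S] A_eq by (intro sum.cong refl) (simp add: merge_y)
  moreover have "ptrace n ?S Z y x = (\<Sum>u\<in>A. Z (?\<tau> u) u)"
  proof -
    have "ptrace n ?S Z y x = (\<Sum>u\<in>B. Z u (?\<tau> u))"
      unfolding ptrace_eq_sum_agreeing[OF S] B_eq by (intro sum.cong refl) (simp add: merge_x)
    then show ?thesis by (simp only: reindex comp_assoc transpose_comp_involutory comp_id)
  qed
  moreover have "sesq n Z (\<lambda>s. ket u s - ket (?\<tau> u) s) (\<lambda>s. ket u s - ket (?\<tau> u) s)
      = Z u u + Z (?\<tau> u) (?\<tau> u) - Z u (?\<tau> u) - Z (?\<tau> u) u" if "u \<in> A" for u
    using that swap_A[OF that] by (simp add: A_def B_def sesq_linear sesq_ket)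
  ultimately show ?thesis
    unfolding A_def[symmetric] by (simp add: sum.distrib sum_subtractf)
qed

lemma same_pair_marginal_imp_antisymmetric_null:
  assumes d: "density n \<sigma>" and \<rho>: "swap_invariant n \<rho>"
    and marg: "same_marginal n {a, b} \<sigma> \<rho>"
    and an: "a < n" and bn: "b < n" and ab: "a \<noteq> b"
    and u: "u \<in> basis n" "u a" "\<not> u b"
  shows "sesq n \<sigma> (\<lambda>s. ket u s - ket (u \<circ> transpose a b) s) (\<lambda>s. ket u s - ket (u \<circ> transpose a b) s) = 0"
proof -
  let ?v = "\<lambda>u s. ket u s - ket (u \<circ> transpose a b) s"
  let ?A = "{u \<in> basis n. u a \<and> \<not> u b}"
  let ?q = "\<lambda>u. sesq n \<sigma> (?v u) (?v u)"
  have "(\<lambda>j. j = a) \<in> asg {a, b}" "(\<lambda>j. j = b) \<in> asg {a, b}" by (auto simp: asg_def)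
  then have "(\<Sum>u\<in>?A. ?q u) = (\<Sum>u\<in>?A. sesq n \<rho> (?v u) (?v u))"
    using marg unfolding pair_marginal_antisymmetric_part[OF an bn ab, symmetric] same_marginal_def
    by simp
  also have "\<dots> = 0"
  proof (intro sum.neutral ballI)
    fix u assume "u \<in> ?A"
    then have "u \<in> basis n" "u \<circ> transpose a b \<in> basis n" by (auto simp: swap_in_basis_iff an bn)
    moreover have "\<rho> (u \<circ> transpose a b) (u \<circ> transpose a b) = \<rho> u u"
      "\<rho> u (u \<circ> transpose a b) = \<rho> u u" "\<rho> (u \<circ> transpose a b) u = \<rho> u u"
      using \<rho> an bn by (simp_all add: swap_invariant_def)
    ultimately show "sesq n \<rho> (?v u) (?v u) = 0" by (simp add: sesq_linear sesq_ket)
  qed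
  finally have "(\<Sum>u\<in>?A. Re (?q u)) = 0" by (metis Re_sum zero_complex.sel(1))
  moreover have "finite ?A" using finite_basis by simp
  ultimately have "Re (?q u) = 0"
    using u density_sesq_nonneg[OF d] sum_nonneg_eq_0_iff[of ?A "\<lambda>u. Re (?q u)"] by blast
  then show ?thesis using density_sesq_nonneg[OF d, of "?v u"] by (simp add: complex_eq_iff)
qed

lemma same_pair_marginals_imp_swap_invariant:
  assumes d: "density n \<sigma>" and \<rho>: "swap_invariant n \<rho>"
    and marg: "\<And>a b. a < n \<Longrightarrow> b < n \<Longrightarrow> a \<noteq> b \<Longrightarrow> same_marginal n {a, b} \<sigma> \<rho>"
  shows "swap_invariant n \<sigma>"
proof -
  have right: "\<sigma> s (t \<circ> transpose a b) = \<sigma> s t" if an: "a < n" and bn: "b < n" for s t a b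
  proof (cases "a \<noteq> b \<and> s \<in> basis n \<and> t \<in> basis n")
    case False
    then show ?thesis
      using density_vanishes_outside_basis[OF d] swap_in_basis_iff[OF an bn] by auto
  next
    case True
    then have ab: "a \<noteq> b" and s: "s \<in> basis n" and t: "t \<in> basis n" by auto
    have kernel: "\<sigma> s (u \<circ> transpose a b) = \<sigma> s u" if u: "u \<in> basis n" "u a" "\<not> u b" for u
    proof -
      have "(\<Sum>t'\<in>basis n. \<sigma> s t' * (ket u t' - ket (u \<circ> transpose a b) t')) = 0"
        by (rule density_sesq_eq_0_imp_kernel[OF d _ s])
          (rule same_pair_marginal_imp_antisymmetric_null[OF d \<rho> marg[OF an bn ab] an bn ab u])
      then show ?thesis
        using u swap_in_basis[OF an bn u(1)]
        by (simp add: right_diff_distrib sum_subtractf sum_mult_ket finite_basis)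
    qed
    consider "t a" "\<not> t b" | "\<not> t a" "t b" | "t a = t b" by blast
    then show ?thesis
    proof cases
      case 2
      then show ?thesis
        using kernel[of "t \<circ> transpose a b"] swap_in_basis[OF an bn t]
        by (simp add: comp_assoc)
    next
      case 3
      then have "t \<circ> transpose a b = t" by (auto simp: fun_eq_iff transpose_def)
      then show ?thesis by simp
    qed (use kernel t in auto)
  qed
  have "\<sigma> (s \<circ> transpose a b) t = \<sigma> s t" if "a < n" "b < n" for s t a b
    using right[OF that, of t s] density_hermitian[OF d] by metis
  with right show ?thesis by (simp add: swap_invariant_def)
qed

section \<open>A binomial certificate for the support\<close>

definition choose_indicator :: "nat \<Rightarrow> nat \<Rightarrow> nat \<Rightarrow> int" where
  "choose_indicator r k w = (\<Sum>m=r..k. (-1) ^ (m - r) * int (m choose r) * int (w choose m))"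

lemma sum_alternating_choose_Suc:
  "(\<Sum>j\<le>d. (-1) ^ j * int (Suc M choose j)) = (-1) ^ d * int (M choose d)"
  by (induction d) (simp_all add: algebra_simps)

lemma choose_mult_shift:
  "(w choose (j + r)) * ((j + r) choose r) = (w choose r) * ((w - r) choose j)"
proof (cases "j + r \<le> w")
  case True
  then show ?thesis using choose_mult[of r "j + r" w] by simp
next
  case False
  then show ?thesis by (cases "r \<le> w") (simp_all add: binomial_eq_0)
qed

lemma choose_indicator_eq:
  assumes "r \<le> k"
  shows "choose_indicator r k w = int (w choose r) * (\<Sum>j\<le>k - r. (-1) ^ j * int ((w - r) choose j))"
proof -
  have "choose_indicator r k w
      = (\<Sum>m=0 + r..(k - r) + r. (-1) ^ (m - r) * int (m choose r) * int (w choose m))"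
    using assms by (simp add: choose_indicator_def)
  also have "\<dots> = (\<Sum>j=0..k - r. (-1) ^ (j + r - r) * int ((j + r) choose r) * int (w choose (j + r)))"
    by (rule sum.shift_bounds_cl_nat_ivl)
  also have "\<dots> = (\<Sum>j\<le>k - r. int (w choose r) * ((-1) ^ j * int ((w - r) choose j)))"
    unfolding atLeast0AtMost
    by (intro sum.cong refl) (simp add: ac_simps flip: of_nat_mult choose_mult_shift)
  finally show ?thesis by (simp add: sum_distrib_left)
qed

lemma choose_indicator_self: "r \<le> k \<Longrightarrow> choose_indicator r k r = 1"
proof -
  have "(\<Sum>j\<le>d. (-1) ^ j * int (0 choose j)) = 1" for d by (induction d) simp_all
  then show "r \<le> k \<Longrightarrow> ?thesis" by (simp add: choose_indicator_eq)
qed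

lemma choose_indicator_eq_0:
  assumes "r \<le> k" "w \<le> k" "w \<noteq> r"
  shows "choose_indicator r k w = 0"
proof (cases "w < r")
  case False
  define M where "M = w - r - 1"
  have "w - r = Suc M" "M < k - r" using assms False by (simp_all add: M_def)
  then show ?thesis using assms by (simp add: choose_indicator_eq sum_alternating_choose_Suc)
qed (simp add: choose_indicator_eq assms)

lemma choose_indicator_pos:
  assumes "r \<le> k" "even (k - r)" "k < w"
  shows "choose_indicator r k w > 0"
proof -
  define M where "M = w - r - 1"
  have M: "w - r = Suc M" using assms by (simp add: M_def)
  then have "k - r \<le> M" using assms by simp
  then show ?thesis using assms by (simp add: choose_indicator_eq M sum_alternating_choose_Suc)
qed

lemma choose_indicator_nonneg:
  assumes "r \<le> k" "even (k - r)"
  shows "choose_indicator r k w \<ge> 0"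
proof (cases "k < w")
  case True
  then show ?thesis using choose_indicator_pos[OF assms True] by simp
next
  case False
  then show ?thesis
    using assms choose_indicator_eq_0[of r k w] choose_indicator_self[of r k] by (cases "w = r") auto
qed

lemma same_marginals_imp_choose_indicator_moment_eq:
  assumes "\<And>T. T \<subseteq> {0..<n} \<Longrightarrow> card T \<le> k \<Longrightarrow> same_marginal n T X Y"
  shows "(\<Sum>s\<in>basis n. of_int (choose_indicator r k (weight n s)) * X s s)
       = (\<Sum>s\<in>basis n. of_int (choose_indicator r k (weight n s)) * Y s s)"
proof -
  have expand: "(\<Sum>s\<in>basis n. of_int (choose_indicator r k (weight n s)) * Z s s)
      = (\<Sum>m=r..k. of_int ((-1) ^ (m - r) * int (m choose r))
                  * (\<Sum>s\<in>basis n. of_nat (weight n s choose m) * Z s s))" for Z :: qop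
    unfolding choose_indicator_def sum_distrib_left of_int_sum sum_distrib_right
    by (subst sum.swap) (intro sum.cong refl, simp add: algebra_simps)
  show ?thesis
    unfolding expand using same_marginals_imp_binomial_moment_eq[OF assms] by simp
qed

lemma density_weighted_trace_eq_0_imp_diag_eq_0:
  assumes d: "density n X" and h: "\<And>s. s \<in> basis n \<Longrightarrow> h s \<ge> 0"
    and sum0: "(\<Sum>s\<in>basis n. of_real (h s) * X s s) = 0"
    and s: "s \<in> basis n" "h s > 0"
  shows "X s s = 0"
proof -
  have "(\<Sum>s\<in>basis n. h s * Re (X s s)) = 0"
    using arg_cong[OF sum0, of Re] by (simp add: Re_sum)
  moreover have "\<forall>s\<in>basis n. h s * Re (X s s) \<ge> 0"
    using h density_diag_real(2)[OF d] by simp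
  ultimately have "h s * Re (X s s) = 0"
    using s sum_nonneg_eq_0_iff[OF finite_basis[of n], of "\<lambda>s. h s * Re (X s s)"] by blast
  then show ?thesis using s density_diag_real(1)[OF d s(1)] by (simp add: complex_eq_iff)
qed

lemma dicke_mix_choose_indicator_moment:
  assumes "r \<le> k" "lam r = 0"
  shows "(\<Sum>s\<in>basis n. of_int (choose_indicator r k (weight n s)) * dicke_mix n k lam s s) = 0"
proof (intro sum.neutral ballI)
  fix s
  show "of_int (choose_indicator r k (weight n s)) * dicke_mix n k lam s s = 0"
    using assms choose_indicator_eq_0[OF assms(1), of "weight n s"]
    by (cases "weight n s = r") (auto simp: dicke_mix_eq)
qed

lemma dicke_compatible_vanishes:
  assumes r: "r \<le> k" "even (k - r)" "lam r = 0" and d: "density n \<sigma>"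
    and marg: "\<And>T. T \<subseteq> {0..<n} \<Longrightarrow> card T \<le> k \<Longrightarrow> same_marginal n T \<sigma> (dicke_mix n k lam)"
    and s: "s \<in> basis n" and w: "k < weight n s \<or> weight n s = r"
  shows "\<sigma> s t = 0" "\<sigma> t s = 0"
proof -
  let ?h = "\<lambda>s. real_of_int (choose_indicator r k (weight n s))"
  have "(\<Sum>s\<in>basis n. of_real (?h s) * \<sigma> s s) = 0"
    using same_marginals_imp_choose_indicator_moment_eq[OF marg, where r = r]
      dicke_mix_choose_indicator_moment[of r k lam n] r by simp
  moreover have "?h s > 0"
    using w choose_indicator_pos[OF r(1,2)] choose_indicator_self[OF r(1)] by auto
  ultimately have "\<sigma> s s = 0"
    using density_weighted_trace_eq_0_imp_diag_eq_0[OF d, of ?h] choose_indicator_nonneg[OF r(1,2)] s by simp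
  then show "\<sigma> t s = 0" "\<sigma> s t = 0"
    using density_diag_eq_0_imp_cross_eq_0[OF d s] by blast+
qed

section \<open>Reconstruction from the first k qubits\<close>

lemma merge_in_basis:
  assumes "k \<le> n" "x \<in> asg {0..<k}" "c \<in> asg ({0..<n} - {0..<k})"
  shows "merge {0..<k} x c \<in> basis n"
  using assms by (auto simp: mem_basis_iff asg_def merge_def)

lemma weight_merge_prefix_state:
  assumes "a \<le> k" "k \<le> n" and c: "c \<in> asg ({0..<n} - {0..<k})"
  shows "weight n (merge {0..<k} (prefix_state a) c) = a + card {j. c j}"
proof -
  have "{j. j < n \<and> merge {0..<k} (prefix_state a) c j} = {0..<a} \<union> {j. c j}"
    using assms by (auto simp: merge_def prefix_state_def asg_def)
  moreover have "{0..<a} \<inter> {j. c j} = {}" "finite {j. c j}"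
    using assms by (auto simp: asg_def intro: finite_subset[of _ "{0..<n}"])
  ultimately show ?thesis by (simp add: weight_def card_Un_disjoint)
qed

lemma ptrace_first_qubits_prefix_states:
  assumes "a \<le> k" "b \<le> k"
  shows "ptrace n {0..<k} Z (prefix_state a) (prefix_state b) = Z (prefix_state a) (prefix_state b)
    + (\<Sum>c\<in>asg ({0..<n} - {0..<k}) - {\<lambda>_. False}.
         Z (merge {0..<k} (prefix_state a) c) (merge {0..<k} (prefix_state b) c))"
proof -
  have "(\<lambda>_. False) \<in> asg ({0..<n} - {0..<k})" by (simp add: asg_def)
  moreover have "merge {0..<k} (prefix_state a) (\<lambda>_. False) = prefix_state a"
    "merge {0..<k} (prefix_state b) (\<lambda>_. False) = prefix_state b"
    using assms by (auto simp: merge_def prefix_state_def)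
  ultimately show ?thesis
    unfolding ptrace_def by (simp add: sum.remove[OF finite_asg])
qed

text \<open>Every summand of the marginal other than the prefix-state entry itself has larger
  total weight, so the entries are recovered by downward induction on a + b.\<close>

lemma eq_prefix_states_by_first_qubits_marginal:
  assumes kn: "k \<le> n" and X: "swap_invariant n X" and Y: "swap_invariant n Y"
    and X_supp: "\<And>s t. s \<in> basis n \<Longrightarrow> t \<in> basis n \<Longrightarrow> k < weight n s \<or> k < weight n t \<Longrightarrow> X s t = 0"
    and Y_supp: "\<And>s t. s \<in> basis n \<Longrightarrow> t \<in> basis n \<Longrightarrow> k < weight n s \<or> k < weight n t \<Longrightarrow> Y s t = 0"
    and M: "same_marginal n {0..<k} X Y"
  shows "a \<le> n \<Longrightarrow> b \<le> n \<Longrightarrow> X (prefix_state a) (prefix_state b) = Y (prefix_state a) (prefix_state b)"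
proof (induction "2 * n - (a + b)" arbitrary: a b rule: less_induct)
  case less
  have a: "prefix_state a \<in> basis n" and b: "prefix_state b \<in> basis n"
    using less.prems by (auto intro: prefix_state_in_basis)
  show ?case
  proof (cases "k < a \<or> k < b")
    case True
    then show ?thesis using X_supp[OF a b] Y_supp[OF a b] weight_prefix_state less.prems by simp
  next
    case False
    then have ak: "a \<le> k" and bk: "b \<le> k" by auto
    let ?u = "\<lambda>c. merge {0..<k} (prefix_state a) c" and ?v = "\<lambda>c. merge {0..<k} (prefix_state b) c"
    have "X (?u c) (?v c) = Y (?u c) (?v c)" if c: "c \<in> asg ({0..<n} - {0..<k}) - {\<lambda>_. False}" for c
    proof -
      have "{j. c j} \<noteq> {}" "finite {j. c j}"
        using c by (auto simp: asg_def intro: finite_subset[of _ "{0..<n}"])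
      then have "card {j. c j} > 0" by (simp add: card_gt_0_iff)
      moreover have "prefix_state a \<in> asg {0..<k}" "prefix_state b \<in> asg {0..<k}"
        using ak bk by (auto simp: asg_def prefix_state_def)
      then have u: "?u c \<in> basis n" and v: "?v c \<in> basis n"
        using c merge_in_basis[OF kn] by auto
      ultimately have "2 * n - (weight n (?u c) + weight n (?v c)) < 2 * n - (a + b)"
        using c ak bk kn weight_le[of n "?u c"] weight_le[of n "?v c"]
        by (simp add: weight_merge_prefix_state)
      then show ?thesis
        using less.hyps weight_le swap_invariant_eq_prefix_states[OF X u v]
          swap_invariant_eq_prefix_states[OF Y u v] by simp
    qed
    moreover have "ptrace n {0..<k} X (prefix_state a) (prefix_state b)
        = ptrace n {0..<k} Y (prefix_state a) (prefix_state b)"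
      using M ak bk by (simp add: same_marginal_def asg_def prefix_state_def)
    ultimately show ?thesis
      unfolding ptrace_first_qubits_prefix_states[OF ak bk] by simp
  qed
qed

lemma dicke_compatible_swap_invariant:
  assumes r: "r \<le> k" "even (k - r)" "lam r = 0" and d: "density n \<sigma>"
    and marg: "\<And>T. T \<subseteq> {0..<n} \<Longrightarrow> card T \<le> k \<Longrightarrow> same_marginal n T \<sigma> (dicke_mix n k lam)"
  shows "swap_invariant n \<sigma>"
proof (cases "2 \<le> k")
  case True
  show ?thesis
    by (rule same_pair_marginals_imp_swap_invariant[OF d swap_invariant_dicke_mix])
      (use True in \<open>auto intro!: marg\<close>)
next
  case False
  text \<open>For k \<le> 1 the parity condition forces r = k, so \<sigma> lives on the all-zero state.\<close>
  then have "r = k" using r(1,2) by (cases "k - r") (auto elim: oddE)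
  let ?P = "\<lambda>s. s \<in> basis n \<and> weight n s = 0"
  have vanishes: "\<sigma> s t = 0" "\<sigma> t s = 0" if "\<not> ?P s" for s t
  proof -
    have "\<sigma> s t = 0 \<and> \<sigma> t s = 0"
    proof (cases "s \<in> basis n")
      case True
      with that have "k < weight n s \<or> weight n s = r" using False \<open>r = k\<close> by auto
      with True show ?thesis using dicke_compatible_vanishes[OF r d marg] by blast
    qed (simp add: density_vanishes_outside_basis[OF d])
    then show "\<sigma> s t = 0" "\<sigma> t s = 0" by simp_all
  qed
  have "s \<circ> transpose a b = s \<or> \<not> ?P s \<and> \<not> ?P (s \<circ> transpose a b)" if "a < n" "b < n" for s a b
    using weight_eq_0_imp_prefix_state[of s n] weight_swap[OF that] swap_in_basis_iff[OF that]
    by (auto simp: prefix_state_def)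
  then show ?thesis
    unfolding swap_invariant_def using vanishes by metis
qed

lemma dicke_mix_determined_by_marginals:
  assumes kn: "k \<le> n" and r: "r \<le> k" "even (k - r)" "lam r = 0" and d: "density n \<sigma>"
    and marg: "\<And>T. T \<subseteq> {0..<n} \<Longrightarrow> card T \<le> k \<Longrightarrow> same_marginal n T \<sigma> (dicke_mix n k lam)"
  shows "\<sigma> = dicke_mix n k lam"
proof (intro ext)
  fix s t
  let ?\<rho> = "dicke_mix n k lam"
  show "\<sigma> s t = ?\<rho> s t"
  proof (cases "s \<in> basis n \<and> t \<in> basis n")
    case True
    have \<sigma>: "swap_invariant n \<sigma>" by (rule dicke_compatible_swap_invariant[OF r d marg])
    have "same_marginal n {0..<k} \<sigma> ?\<rho>" by (rule marg) (use kn in auto)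
    moreover have "\<sigma> u v = 0" if "u \<in> basis n" "v \<in> basis n" "k < weight n u \<or> k < weight n v" for u v
      using that dicke_compatible_vanishes[OF r d marg] by blast
    moreover have "?\<rho> u v = 0" if "k < weight n u \<or> k < weight n v" for u v
      using that by (auto simp: dicke_mix_eq)
    ultimately have "\<sigma> (prefix_state a) (prefix_state b) = ?\<rho> (prefix_state a) (prefix_state b)"
      if "a \<le> n" "b \<le> n" for a b
      using eq_prefix_states_by_first_qubits_marginal[OF kn \<sigma> swap_invariant_dicke_mix] that by blast
    then show ?thesis
      using True swap_invariant_eq_prefix_states[OF \<sigma>] swap_invariant_eq_prefix_states[OF swap_invariant_dicke_mix]
        weight_le by simp
  next
    case False
    then show ?thesis using density_vanishes_outside_basis[OF d] by (auto simp: dicke_mix_eq)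
  qed
qed

theorem mainTheorem20:
  fixes n k :: nat and lam :: "nat \<Rightarrow> real" and istar :: nat
  assumes "1 \<le> k" and "k \<le> n"
    and "\<forall>i\<in>{0..k}. lam i \<ge> 0"
    and "(\<Sum>i\<in>{0..k}. lam i) = 1"
    and "istar \<in> {0..k}" and "even (k - istar)" and "lam istar = 0"
  shows "Lmin n (dicke_mix n k lam) \<le> k"
proof -
  let ?\<rho> = "dicke_mix n k lam"
  define \<S> where "\<S> = {S. S \<subseteq> {0..<n} \<and> card S \<le> k}"
  have "?\<rho> \<in> compatible n ?\<rho> \<S>"
    using density_dicke_mix[OF assms(2-4)] by (simp add: compatible_def same_marginal_def)
  moreover have "\<sigma> = ?\<rho>" if "\<sigma> \<in> compatible n ?\<rho> \<S>" for \<sigma>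
    using that dicke_mix_determined_by_marginals[of k n istar lam \<sigma>] assms(2,5-7)
    by (auto simp: compatible_def \<S>_def)
  ultimately have "determines n \<S> ?\<rho>" unfolding determines_def by blast
  then show ?thesis unfolding Lmin_def by (intro Least_le exI[of _ \<S>]) (auto simp: \<S>_def)
qed

end
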